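(* Let $(X,\mathcal{R})$ be an association scheme with rank $d+1\geq 4$, and let $\Gamma$ be the connected scheme graph of a relation $R_1\in\mathcal{R}$. Let $x,z\in X$ with $(x,z)\in R_a$ for some relation $R_a$ and $\mathrm{dist}_\Gamma(x,z)=i\geq 2$. Assume there exist two distinct neighbors $z_3,z_4$ of $z$ in $\Gamma$ and two distinct relations $R_b,R_c\in\mathcal{R}$ such that $(x,z_3)\in R_b$, $(x,z_4)\in R_c$, $\mathrm{dist}_\Gamma(x,z_3)=\mathrm{dist}_\Gamma(x,z_4)=i+1$, and $c_{i+1}(x,z_3)=1$. Then there exists a relation $R_e\in\mathcal{R}$ such that $p^1_{be}\neq 0$, $p^1_{ce}\neq 0$, and no pair in $R_e$ is at distance $i$ in $\Gamma$.
   Context: A (symmetric) association scheme with rank $d+1$ on a finite set $X$ is a partition $\mathcal{R}=\{R_0,\dots,R_d\}$ of $X\times X$ with $R_0$ the diagonal, each $R_i$ symmetric, and numbers $p^h_{ij}$ such that for every $(x,y)\in R_h$ the number of $z$ with $(x,z)\in R_i$, $(z,y)\in R_j$ equals $p^h_{ij}$. The scheme graph of $R_1$ is the graph on $X$ with $x\sim y$ iff $(x,y)\in R_1$. For vertices $x,y$ at distance $j$ in $\Gamma$, $c_j(x,y)$ denotes the number of neighbors of $y$ at distance $j-1$ from $x$. *)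

theory Defs
  imports Main
begin

definition assoc_scheme :: "'a set \<Rightarrow> nat \<Rightarrow> (nat \<Rightarrow> ('a \<times> 'a) set) \<Rightarrow> bool" where
  "assoc_scheme X d R \<longleftrightarrow>
     finite X \<and>
     R 0 = Id_on X \<and>
     (\<forall>i\<le>d. R i \<noteq> {} \<and> R i \<subseteq> X \<times> X \<and> converse (R i) = R i) \<and>
     (\<Union>i\<in>{..d}. R i) = X \<times> X \<and>
     (\<forall>i\<le>d. \<forall>j\<le>d. i \<noteq> j \<longrightarrow> R i \<inter> R j = {}) \<and>
     (\<forall>h\<le>d. \<forall>i\<le>d. \<forall>j\<le>d. \<exists>p. \<forall>x y. (x, y) \<in> R h \<longrightarrow>
        card {z \<in> X. (x, z) \<in> R i \<and> (z, y) \<in> R j} = p)"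

definition inter_num :: "'a set \<Rightarrow> (nat \<Rightarrow> ('a \<times> 'a) set) \<Rightarrow> nat \<Rightarrow> nat \<Rightarrow> nat \<Rightarrow> nat" where
  "inter_num X R h i j = (SOME p. \<forall>x y. (x, y) \<in> R h \<longrightarrow>
        card {z \<in> X. (x, z) \<in> R i \<and> (z, y) \<in> R j} = p)"

definition gdist :: "('a \<times> 'a) set \<Rightarrow> 'a \<Rightarrow> 'a \<Rightarrow> nat" where
  "gdist E x y = (LEAST n. (x, y) \<in> E ^^ n)"

definition gconnected :: "'a set \<Rightarrow> ('a \<times> 'a) set \<Rightarrow> bool" where
  "gconnected X E \<longleftrightarrow> (\<forall>x\<in>X. \<forall>y\<in>X. \<exists>n. (x, y) \<in> E ^^ n)"

definition c_num :: "'a set \<Rightarrow> ('a \<times> 'a) set \<Rightarrow> nat \<Rightarrow> 'a \<Rightarrow> 'a \<Rightarrow> nat" where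
  "c_num X E j x y = card {w \<in> X. (y, w) \<in> E \<and> gdist E x w = j - 1}"

end

theory Submission
  imports Defs
begin

text \<open>The relation of z3 to the neighbour w1 of x on a geodesic from x to z is forced:
  the intersection numbers let us copy the triangle (z3, w1, x) onto the pair (x, z3), which
  produces a neighbour of z3 at the same distance from x as w1 from z3, i.e. at distance i.
  Since c_{i+1}(x, z3) = 1 that neighbour is z, so (w1, z3) lies in R_a, the relation of (x, z).
  Copying the triangle (x, z4, z) onto (w1, z3) then gives a neighbour v of z3 with
  (w1, v) in R_c, and the relation R_e of (x, v) does the job: v cannot be z, because w1 is
  closer to z than x is to z4, so (x, v) is not at distance i; and the triangles (z3, x, v)
  and (w1, v, x) witness p^1_{be} and p^1_{ce}.\<close>

lemma gdist_le: "(u, v) \<in> E ^^ n \<Longrightarrow> gdist E u v \<le> n"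
  unfolding gdist_def by (rule Least_le)

lemma gdist_relpow:
  assumes "gconnected X E" "u \<in> X" "v \<in> X"
  shows "(u, v) \<in> E ^^ gdist E u v"
proof -
  obtain n where "(u, v) \<in> E ^^ n" using assms unfolding gconnected_def by blast
  then show ?thesis unfolding gdist_def by (rule LeastI)
qed

lemma gdist_edge_le:
  assumes "gconnected X E" "u \<in> X" "w \<in> X" "(w, y) \<in> E"
  shows "gdist E u y \<le> Suc (gdist E u w)"
  using relpow_Suc_I[OF gdist_relpow[OF assms(1-3)] assms(4)] by (rule gdist_le)

lemma c_num_eq_1_unique:
  assumes "c_num X E j x y = 1"
    and "z \<in> X" "(y, z) \<in> E" "gdist E x z = j - 1"
    and "w \<in> X" "(y, w) \<in> E" "gdist E x w = j - 1"
  shows "w = z"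
proof -
  let ?S = "{w \<in> X. (y, w) \<in> E \<and> gdist E x w = j - 1}"
  obtain t where "?S = {t}"
    using assms(1) unfolding c_num_def by (rule card_1_singletonE)
  moreover have "z \<in> ?S" "w \<in> ?S" using assms(2-7) by simp_all
  ultimately show ?thesis by simp
qed

locale association_scheme =
  fixes X :: "'a set" and d :: nat and R :: "nat \<Rightarrow> ('a \<times> 'a) set"
  assumes scheme: "assoc_scheme X d R"
begin

lemma finite_X: "finite X"
  using scheme by (simp add: assoc_scheme_def)

lemma R_0: "R 0 = Id_on X"
  using scheme by (simp add: assoc_scheme_def)

lemma R_subset: "h \<le> d \<Longrightarrow> (u, v) \<in> R h \<Longrightarrow> u \<in> X \<and> v \<in> X"
  using scheme unfolding assoc_scheme_def by (simp add: subset_iff)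

lemma R_sym: "h \<le> d \<Longrightarrow> (u, v) \<in> R h \<Longrightarrow> (v, u) \<in> R h"
  using scheme unfolding assoc_scheme_def by (metis converseI)

lemma R_cover:
  assumes "u \<in> X" "v \<in> X"
  obtains h where "h \<le> d" "(u, v) \<in> R h"
proof -
  have "(\<Union>i\<in>{..d}. R i) = X \<times> X" using scheme by (simp add: assoc_scheme_def)
  then show ?thesis using assms that by blast
qed

lemma R_unique: "h \<le> d \<Longrightarrow> j \<le> d \<Longrightarrow> (u, v) \<in> R h \<Longrightarrow> (u, v) \<in> R j \<Longrightarrow> h = j"
  using scheme unfolding assoc_scheme_def by (metis IntI empty_iff)

lemma R_diag_iff: "h \<le> d \<Longrightarrow> (u, v) \<in> R h \<Longrightarrow> u = v \<longleftrightarrow> h = 0"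
  using R_0 R_subset R_unique[of h 0 u v] by auto

lemma inter_num_eq_card:
  assumes "h \<le> d" "i \<le> d" "j \<le> d" "(u, v) \<in> R h"
  shows "inter_num X R h i j = card {w \<in> X. (u, w) \<in> R i \<and> (w, v) \<in> R j}"
proof -
  have "\<forall>h\<le>d. \<forall>i\<le>d. \<forall>j\<le>d. \<exists>p. \<forall>x y. (x, y) \<in> R h \<longrightarrow>
      card {z \<in> X. (x, z) \<in> R i \<and> (z, y) \<in> R j} = p"
    using scheme by (simp add: assoc_scheme_def)
  then obtain p where "\<forall>x y. (x, y) \<in> R h \<longrightarrow> card {z \<in> X. (x, z) \<in> R i \<and> (z, y) \<in> R j} = p"
    using assms(1-3) by blast
  then have "\<forall>x y. (x, y) \<in> R h \<longrightarrow>
      card {z \<in> X. (x, z) \<in> R i \<and> (z, y) \<in> R j} = inter_num X R h i j"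
    unfolding inter_num_def by (rule someI)
  then show ?thesis using assms(4) by simp
qed

lemma inter_num_neq_0_iff:
  assumes "h \<le> d" "i \<le> d" "j \<le> d" "(u, v) \<in> R h"
  shows "inter_num X R h i j \<noteq> 0 \<longleftrightarrow> (\<exists>w. (u, w) \<in> R i \<and> (w, v) \<in> R j)"
  using inter_num_eq_card[OF assms] finite_X R_subset[OF assms(2)] by auto

lemma triangle_transfer:
  assumes "h \<le> d" "i \<le> d" "j \<le> d" "(u, v) \<in> R h" "(u', v') \<in> R h"
    and "(u, w) \<in> R i" "(w, v) \<in> R j"
  obtains w' where "(u', w') \<in> R i" "(w', v') \<in> R j"
  using inter_num_neq_0_iff[OF assms(1-4)] inter_num_neq_0_iff[OF assms(1-3,5)] assms(6,7)
  by blast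

lemma relpow_transfer:
  assumes "k \<le> d" "h \<le> d" "(u, v) \<in> R h" "(u', v') \<in> R h" "(u, v) \<in> R k ^^ n"
  shows "(u', v') \<in> R k ^^ n"
  using assms(2-5)
proof (induction n arbitrary: h v v')
  case 0
  then show ?case using R_diag_iff by (auto elim: relpow_0_E intro: relpow_0_I)
next
  case (Suc n)
  obtain w where w: "(u, w) \<in> R k ^^ n" "(w, v) \<in> R k"
    using Suc.prems(4) by (auto elim: relpow_Suc_E)
  obtain j where j: "j \<le> d" "(u, w) \<in> R j"
    using R_cover R_subset[OF Suc.prems(1,2)] R_subset[OF assms(1) w(2)] by metis
  obtain w' where w': "(u', w') \<in> R j" "(w', v') \<in> R k"
    using triangle_transfer[OF Suc.prems(1) j(1) assms(1) Suc.prems(2,3) j(2) w(2)] .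
  show ?case using Suc.IH[OF j w'(1) w(1)] w'(2) by (rule relpow_Suc_I)
qed

lemma gdist_transfer:
  assumes "k \<le> d" "h \<le> d" "(u, v) \<in> R h" "(u', v') \<in> R h"
  shows "gdist (R k) u v = gdist (R k) u' v'"
  using relpow_transfer[OF assms(1,2)] assms(3,4) unfolding gdist_def by metis

end

locale scheme_graph = association_scheme +
  assumes one_le_d: "1 \<le> d" and connected: "gconnected X (R 1)"
begin

lemma geodesic_neighbour_same_relation:
  assumes xz: "a \<le> d" "(x, z) \<in> R a" "gdist (R 1) x z = Suc m"
    and zy: "(z, y) \<in> R 1" "gdist (R 1) x y = Suc (Suc m)"
    and unique: "\<And>w. (y, w) \<in> R 1 \<Longrightarrow> gdist (R 1) x w = Suc m \<Longrightarrow> w = z"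
    and w1: "(x, w1) \<in> R 1" "(w1, z) \<in> R 1 ^^ m"
  shows "(w1, y) \<in> R a"
proof -
  have X: "x \<in> X" "y \<in> X" "w1 \<in> X"
    using R_subset one_le_d zy(1) w1(1) xz(1,2) by blast+
  obtain h where h: "h \<le> d" "(w1, y) \<in> R h" using R_cover X(3,2) by metis
  obtain b where b: "b \<le> d" "(x, y) \<in> R b" using R_cover X(1,2) by metis
  obtain w where w: "(x, w) \<in> R h" "(w, y) \<in> R 1"
    using triangle_transfer[OF b(1) h(1) one_le_d R_sym[OF b] b(2) R_sym[OF h] R_sym[OF one_le_d w1(1)]] .
  have "gdist (R 1) x w = gdist (R 1) w1 y"
    using gdist_transfer[OF one_le_d h(1) w(1) h(2)] .
  also have "\<dots> \<le> Suc m"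
    using gdist_le[OF relpow_Suc_I[OF w1(2) zy(1)]] .
  finally have "gdist (R 1) x w = Suc m"
    using gdist_edge_le[OF connected X(1) _ w(2)] R_subset[OF one_le_d w(2)] zy(2) by fastforce
  then have "w = z" using unique R_sym[OF one_le_d w(2)] by blast
  then show ?thesis using R_unique[OF h(1) xz(1)] w(1) xz(2) h(2) by blast
qed

end

theorem lemma2p4:
  fixes X :: "'a set" and d :: nat and R :: "nat \<Rightarrow> ('a \<times> 'a) set"
    and x z z3 z4 :: 'a and a b c i :: nat
  assumes scheme: "assoc_scheme X d R"
    and rank: "d + 1 \<ge> 4"
    and conn: "gconnected X (R 1)"
    and xz: "x \<in> X" "z \<in> X" "a \<le> d" "(x, z) \<in> R a"
    and dxz: "gdist (R 1) x z = i" and i2: "i \<ge> 2"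
    and z34: "z3 \<in> X" "z4 \<in> X" "z3 \<noteq> z4" "(z, z3) \<in> R 1" "(z, z4) \<in> R 1"
    and bc: "b \<le> d" "c \<le> d" "b \<noteq> c" "(x, z3) \<in> R b" "(x, z4) \<in> R c"
    and d34: "gdist (R 1) x z3 = i + 1" "gdist (R 1) x z4 = i + 1"
    and c1: "c_num X (R 1) (i + 1) x z3 = 1"
  shows "\<exists>e\<le>d. inter_num X R 1 b e \<noteq> 0 \<and> inter_num X R 1 c e \<noteq> 0 \<and>
           (\<forall>u v. (u, v) \<in> R e \<longrightarrow> gdist (R 1) u v \<noteq> i)"
proof -
  interpret scheme_graph X d R
    using scheme rank conn by unfold_locales simp_all
  have unique: "\<And>w. (z3, w) \<in> R 1 \<Longrightarrow> gdist (R 1) x w = i \<Longrightarrow> w = z"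
    using c_num_eq_1_unique[OF c1] xz(2) R_sym[OF one_le_d z34(4)] dxz
      R_subset[OF one_le_d] by fastforce
  obtain m where m: "i = Suc m" using i2 by (cases i) auto
  have "(x, z) \<in> R 1 ^^ Suc m" using gdist_relpow[OF conn xz(1,2)] dxz m by simp
  then obtain w1 where w1: "(x, w1) \<in> R 1" "(w1, z) \<in> R 1 ^^ m" by (rule relpow_Suc_E2)
  have "(w1, z3) \<in> R a"
    using geodesic_neighbour_same_relation[OF xz(3,4) _ z34(4) _ _ w1] dxz d34(1) m unique by simp
  then obtain v where v: "(w1, v) \<in> R c" "(v, z3) \<in> R 1"
    using triangle_transfer[OF xz(3) bc(2) one_le_d xz(4) _ bc(5) R_sym[OF one_le_d z34(5)]] by blast
  obtain e where e: "e \<le> d" "(x, v) \<in> R e"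
    using R_cover xz(1) R_subset[OF one_le_d v(2)] by metis
  have "gdist (R 1) x v \<noteq> i"
  proof
    assume "gdist (R 1) x v = i"
    then have "v = z" using unique R_sym[OF one_le_d v(2)] by blast
    then have "gdist (R 1) w1 z = i + 1" using gdist_transfer[OF one_le_d bc(2) v(1) bc(5)] d34(2) by simp
    then show False using gdist_le[OF w1(2)] m by simp
  qed
  then have "\<forall>u u'. (u, u') \<in> R e \<longrightarrow> gdist (R 1) u u' \<noteq> i"
    using gdist_transfer[OF one_le_d e] by metis
  moreover have "inter_num X R 1 b e \<noteq> 0"
    using inter_num_neq_0_iff[OF one_le_d bc(1) e(1) R_sym[OF one_le_d v(2)]] R_sym[OF bc(1,4)] e(2) by blast
  moreover have "inter_num X R 1 c e \<noteq> 0"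
    using inter_num_neq_0_iff[OF one_le_d bc(2) e(1) R_sym[OF one_le_d w1(1)]] v(1) R_sym[OF e] by blast
  ultimately show ?thesis using e(1) by blast
qed

end
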